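(* Let $(D,\rho)$, $(L_1,\sigma_1)$, $(L_2,\sigma_2)$ be metric spaces and let $(\mathcal M,\|\cdot\|)$ be a normed linear space. Let $\varphi_1: D\times L_1\to\mathcal M$ and $\varphi_2: D\times L_2\to\mathcal M$ be maps such that: (a) there are $C_0>0$ and $\alpha>0$ such that for $i=1,2$, all $\xi\in D$ and all $x,y\in L_i$, $\|\varphi_i(\xi,x)-\varphi_i(\xi,y)\|\le C_0[\sigma_i(x,y)]^{\alpha}$; (b) there are $M_0>0$ and $\beta>0$ such that the function $\Phi(\xi,x_1,x_2):=\varphi_1(\xi,x_1)-\varphi_2(\xi,x_2)$ on $D\times L_1\times L_2$ satisfies $\|\Phi(\xi',x_1,x_2)-\Phi(\xi,x_1,x_2)\|\ge M_0[\rho(\xi',\xi)]^{\beta}$ for all $(x_1,x_2)\in L_1\times L_2$ and all $\xi,\xi'\in D$. Then the set $\Delta:=\{\xi\in D:\ \varphi_1(\xi,L_1)\cap\varphi_2(\xi,L_2)\ne\varnothing\}$ satisfies $$\dim_H\Delta\le\min\{(\beta/\alpha)\dim_H(L_1\times L_2),\ \dim_H D\}.$$ Moreover, if $\varphi_1,\varphi_2$ are continuous and $L_1,L_2$ are compact, then $\Delta$ is closed in $D$.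
   Context: Cartesian products of metric spaces carry the canonical product metric, e.g. on $L_1\times L_2$: $\tilde\sigma((x_1,x_2),(y_1,y_2))=\sqrt{\sigma_1(x_1,y_1)^2+\sigma_2(x_2,y_2)^2}$, and similarly on $D\times L_i$ and $D\times L_1\times L_2$. $\dim_H$ denotes Hausdorff dimension of a metric space. *)

theory Defs
  imports "HOL-Analysis.Analysis"
begin

definition hausdorff_pre :: "real \<Rightarrow> real \<Rightarrow> 'a::metric_space set \<Rightarrow> ennreal" where
  "hausdorff_pre s \<delta> A =
     (INF U \<in> {U :: nat \<Rightarrow> 'a set. A \<subseteq> (\<Union>i. U i) \<and>
                 (\<forall>i. bounded (U i) \<and> diameter (U i) \<le> \<delta>)}.
        (\<Sum>i. ennreal (diameter (U i) powr s)))"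

definition hausdorff_measure :: "real \<Rightarrow> 'a::metric_space set \<Rightarrow> ennreal" where
  "hausdorff_measure s A = (SUP \<delta> \<in> {0<..}. hausdorff_pre s \<delta> A)"

definition hausdorff_dim :: "'a::metric_space set \<Rightarrow> ereal" where
  "hausdorff_dim A = Inf {ereal s | s. 0 < s \<and> hausdorff_measure s A = 0}"

end

theory Submission
  imports Defs
begin

text \<open>Pick for every parameter \<open>\<xi>\<close> in \<open>\<Delta>\<close> a coincidence point \<open>g \<xi> \<in> L\<^sub>1 \<times> L\<^sub>2\<close>.
  Since \<open>\<Phi>(\<xi>, g \<xi>) = 0\<close> and \<open>\<Phi>(\<xi>', g \<xi>') = 0\<close>, condition (b) bounds \<open>\<Phi>(\<xi>', g \<xi>)\<close> from
  below by \<open>M\<^sub>0 \<rho>(\<xi>,\<xi>')\<^sup>\<beta>\<close>, while condition (a) bounds it from above by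
  \<open>2 C\<^sub>0 dist(g \<xi>, g \<xi>')\<^sup>\<alpha>\<close>. Hence \<open>g\<close> has an \<open>\<alpha>/\<beta>\<close>-Holder inverse on its image, and a
  set carried onto a subset of \<open>L\<^sub>1 \<times> L\<^sub>2\<close> by a map with \<open>\<gamma>\<close>-Holder inverse has dimension at most
  \<open>1/\<gamma>\<close> times that of \<open>L\<^sub>1 \<times> L\<^sub>2\<close>. Closedness holds because \<open>\<Delta>\<close> is the projection to \<open>D\<close>
  of a relatively closed subset of \<open>D \<times> L\<^sub>1 \<times> L\<^sub>2\<close>, and projections along a compact factor are
  closed maps.\<close>

lemma hausdorff_pre_le_hausdorff_measure:
  "\<delta> > 0 \<Longrightarrow> hausdorff_pre s \<delta> A \<le> hausdorff_measure s A"
  unfolding hausdorff_measure_def by (rule SUP_upper) simp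

lemma hausdorff_pre_mono: "A \<subseteq> B \<Longrightarrow> hausdorff_pre s \<delta> A \<le> hausdorff_pre s \<delta> B"
  unfolding hausdorff_pre_def by (rule INF_superset_mono) auto

lemma hausdorff_measure_mono: "A \<subseteq> B \<Longrightarrow> hausdorff_measure s A \<le> hausdorff_measure s B"
  unfolding hausdorff_measure_def by (intro SUP_mono) (auto intro: hausdorff_pre_mono)

lemma hausdorff_dim_mono:
  assumes "A \<subseteq> B"
  shows "hausdorff_dim A \<le> hausdorff_dim B"
proof -
  have "hausdorff_measure s A = 0" if "hausdorff_measure s B = 0" for s
    using hausdorff_measure_mono[OF assms, of s] that by simp
  then show ?thesis
    unfolding hausdorff_dim_def by (intro Inf_superset_mono) blast
qed

lemma hausdorff_dim_le: "s > 0 \<Longrightarrow> hausdorff_measure s A = 0 \<Longrightarrow> hausdorff_dim A \<le> ereal s"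
  unfolding hausdorff_dim_def by (rule Inf_lower) auto

lemma diameter_le_dist:
  fixes S :: "'a::metric_space set"
  assumes "0 \<le> d" "\<And>x y. x \<in> S \<Longrightarrow> y \<in> S \<Longrightarrow> dist x y \<le> d"
  shows "diameter S \<le> d"
  using assms by (auto simp: diameter_def intro!: cSUP_least)

lemma hausdorff_pre_le_pullback_cover:
  fixes f :: "'a::metric_space \<Rightarrow> 'b::metric_space"
  assumes K: "K > 0" and \<gamma>: "\<gamma> > 0" and s: "s > 0"
    and H: "\<forall>x\<in>A. \<forall>y\<in>A. dist x y \<le> K * dist (f x) (f y) powr \<gamma>"
    and cover: "f ` A \<subseteq> (\<Union>i. U i)" and U: "\<forall>i. bounded (U i) \<and> diameter (U i) \<le> \<delta>"
  shows "hausdorff_pre (s / \<gamma>) (K * \<delta> powr \<gamma>) A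
           \<le> ennreal (K powr (s / \<gamma>)) * (\<Sum>i. ennreal (diameter (U i) powr s))"
proof -
  define V where "V i = {x \<in> A. f x \<in> U i}" for i
  have V_dist: "dist x y \<le> K * diameter (U i) powr \<gamma>" if "x \<in> V i" "y \<in> V i" for x y i
  proof -
    have "dist (f x) (f y) \<le> diameter (U i)" "x \<in> A" "y \<in> A"
      using that U by (auto simp: V_def intro: diameter_bounded_bound)
    then show ?thesis
      using H K \<gamma> by (meson mult_left_mono order.trans less_imp_le powr_mono2 zero_le_dist)
  qed
  have V_bounded: "bounded (V i)" for i
    unfolding bounded_two_points using V_dist by blast
  have V_diameter: "diameter (V i) \<le> K * diameter (U i) powr \<gamma>" for i
    using V_dist K by (intro diameter_le_dist) auto
  have "diameter (V i) \<le> K * \<delta> powr \<gamma>" for i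
    using V_diameter[of i] U K \<gamma> diameter_ge_0[of "U i"]
    by (meson mult_left_mono order.trans less_imp_le powr_mono2)
  moreover have "A \<subseteq> (\<Union>i. V i)"
    using cover unfolding V_def by auto
  ultimately have "hausdorff_pre (s / \<gamma>) (K * \<delta> powr \<gamma>) A \<le> (\<Sum>i. ennreal (diameter (V i) powr (s / \<gamma>)))"
    unfolding hausdorff_pre_def using V_bounded by (intro INF_lower) auto
  also have "\<dots> \<le> (\<Sum>i. ennreal (K powr (s / \<gamma>)) * ennreal (diameter (U i) powr s))"
  proof (intro suminf_le allI)
    fix i
    have "diameter (V i) powr (s / \<gamma>) \<le> (K * diameter (U i) powr \<gamma>) powr (s / \<gamma>)"
      using V_diameter[of i] s \<gamma> diameter_ge_0[OF V_bounded] by (intro powr_mono2) auto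
    also have "\<dots> = K powr (s / \<gamma>) * diameter (U i) powr s"
      using K \<gamma> diameter_ge_0[of "U i"] U by (simp add: powr_mult powr_powr)
    finally show "ennreal (diameter (V i) powr (s / \<gamma>))
                    \<le> ennreal (K powr (s / \<gamma>)) * ennreal (diameter (U i) powr s)"
      by (simp add: ennreal_mult[symmetric])
  qed auto
  finally show ?thesis by simp
qed

lemma hausdorff_measure_zero_if_inverse_Holder:
  fixes f :: "'a::metric_space \<Rightarrow> 'b::metric_space"
  assumes K: "K > 0" and \<gamma>: "\<gamma> > 0" and s: "s > 0"
    and H: "\<forall>x\<in>A. \<forall>y\<in>A. dist x y \<le> K * dist (f x) (f y) powr \<gamma>"
    and null: "hausdorff_measure s (f ` A) = 0"
  shows "hausdorff_measure (s / \<gamma>) A = 0"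
proof -
  have "hausdorff_pre (s / \<gamma>) \<delta> A = 0" if \<delta>: "\<delta> > 0" for \<delta>
  proof -
    define \<delta>' where "\<delta>' = (\<delta> / K) powr (1 / \<gamma>)"
    define c where "c = K powr (s / \<gamma>)"
    have "K * \<delta>' powr \<gamma> = \<delta>"
      using \<delta> K \<gamma> by (simp add: \<delta>'_def powr_powr)
    have "hausdorff_pre s \<delta>' (f ` A) = 0"
      using hausdorff_pre_le_hausdorff_measure[of \<delta>' s "f ` A"] null \<delta> K
      by (simp add: \<delta>'_def)
    have "hausdorff_pre (s / \<gamma>) \<delta> A \<le> 0 + ennreal e" if e: "e > 0" for e :: real
    proof -
      have "c > 0" using K by (simp add: c_def)
      with e \<open>hausdorff_pre s \<delta>' (f ` A) = 0\<close>
      have "hausdorff_pre s \<delta>' (f ` A) < ennreal (e / c)" by simp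
      then obtain U where U: "f ` A \<subseteq> (\<Union>i. U i)" "\<forall>i. bounded (U i) \<and> diameter (U i) \<le> \<delta>'"
        and small: "(\<Sum>i. ennreal (diameter (U i) powr s)) < ennreal (e / c)"
        unfolding hausdorff_pre_def INF_less_iff by auto
      have "hausdorff_pre (s / \<gamma>) \<delta> A \<le> ennreal c * (\<Sum>i. ennreal (diameter (U i) powr s))"
        using hausdorff_pre_le_pullback_cover[OF K \<gamma> s H U] \<open>K * \<delta>' powr \<gamma> = \<delta>\<close>
        by (simp add: c_def)
      also have "\<dots> \<le> ennreal c * ennreal (e / c)"
        using small by (intro mult_left_mono) auto
      also have "\<dots> = ennreal e"
        using \<open>c > 0\<close> e by (simp flip: ennreal_mult)
      finally show ?thesis by (simp only: add_0_left)
    qed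
    then have "hausdorff_pre (s / \<gamma>) \<delta> A \<le> 0"
      by (rule ennreal_le_epsilon)
    then show ?thesis by simp
  qed
  then show ?thesis
    by (simp add: hausdorff_measure_def)
qed

lemma hausdorff_dim_le_if_inverse_Holder:
  fixes f :: "'a::metric_space \<Rightarrow> 'b::metric_space"
  assumes K: "K > 0" and \<gamma>: "\<gamma> > 0"
    and H: "\<forall>x\<in>A. \<forall>y\<in>A. dist x y \<le> K * dist (f x) (f y) powr \<gamma>"
  shows "hausdorff_dim A \<le> ereal (1 / \<gamma>) * hausdorff_dim (f ` A)"
proof -
  have "ereal \<gamma> * hausdorff_dim A \<le> hausdorff_dim (f ` A)"
    unfolding hausdorff_dim_def[of "f ` A"]
  proof (rule Inf_greatest, clarify)
    fix s assume "0 < s" "hausdorff_measure s (f ` A) = 0"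
    then have "hausdorff_dim A \<le> ereal (s / \<gamma>)"
      using hausdorff_measure_zero_if_inverse_Holder[OF K \<gamma> _ H] \<gamma> by (intro hausdorff_dim_le) auto
    then have "ereal \<gamma> * hausdorff_dim A \<le> ereal \<gamma> * ereal (s / \<gamma>)"
      using \<gamma> by (intro ereal_mult_left_mono) auto
    then show "ereal \<gamma> * hausdorff_dim A \<le> ereal s"
      using \<gamma> by simp
  qed
  then have "ereal (1 / \<gamma>) * (ereal \<gamma> * hausdorff_dim A) \<le> ereal (1 / \<gamma>) * hausdorff_dim (f ` A)"
    using \<gamma> by (intro ereal_mult_left_mono) auto
  then show ?thesis
    using \<gamma> by (simp add: mult.assoc[symmetric])
qed

lemma closedin_coincidence_parameters:
  fixes \<phi>1 :: "'d::topological_space \<times> 'a::topological_space \<Rightarrow> 'm::real_normed_vector"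
    and \<phi>2 :: "'d \<times> 'b::topological_space \<Rightarrow> 'm"
  assumes "continuous_on (D \<times> L1) \<phi>1" "continuous_on (D \<times> L2) \<phi>2"
    and "compact L1" "compact L2"
  shows "closedin (top_of_set D) {\<xi> \<in> D. (\<lambda>x. \<phi>1 (\<xi>, x)) ` L1 \<inter> (\<lambda>x. \<phi>2 (\<xi>, x)) ` L2 \<noteq> {}}"
proof -
  define Z where "Z = {p \<in> D \<times> (L1 \<times> L2). \<phi>1 (fst p, fst (snd p)) - \<phi>2 (fst p, snd (snd p)) = 0}"
  have "continuous_on (D \<times> (L1 \<times> L2)) (\<lambda>p. \<phi>1 (fst p, fst (snd p)) - \<phi>2 (fst p, snd (snd p)))"
    by (intro continuous_on_diff continuous_on_compose2[OF assms(1)]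
          continuous_on_compose2[OF assms(2)] continuous_intros) (auto simp: mem_Times_iff)
  then have "closedin (top_of_set (D \<times> (L1 \<times> L2))) Z"
    unfolding Z_def by (rule continuous_closedin_preimage_constant)
  moreover have "closed_map (top_of_set (D \<times> (L1 \<times> L2))) (top_of_set D) fst"
    using closed_map_fst[of "top_of_set (L1 \<times> L2)" "top_of_set D"] assms(3,4)
    by (simp add: compact_space_subtopology compact_Times)
  ultimately have "closedin (top_of_set D) (fst ` Z)"
    unfolding closed_map_def by blast
  moreover have "fst ` Z = {\<xi> \<in> D. (\<lambda>x. \<phi>1 (\<xi>, x)) ` L1 \<inter> (\<lambda>x. \<phi>2 (\<xi>, x)) ` L2 \<noteq> {}}"
  proof (intro equalityI subsetI)
    fix \<xi> assume "\<xi> \<in> {\<xi> \<in> D. (\<lambda>x. \<phi>1 (\<xi>, x)) ` L1 \<inter> (\<lambda>x. \<phi>2 (\<xi>, x)) ` L2 \<noteq> {}}"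
    then obtain x1 x2 where "\<xi> \<in> D" "x1 \<in> L1" "x2 \<in> L2" "\<phi>1 (\<xi>, x1) = \<phi>2 (\<xi>, x2)"
      by auto
    then have "(\<xi>, x1, x2) \<in> Z" by (simp add: Z_def)
    then show "\<xi> \<in> fst ` Z" by (rule rev_image_eqI) simp
  qed (auto simp: Z_def)
  ultimately show ?thesis by simp
qed

lemma coincidence_parameters_dist_le:
  fixes \<phi>1 :: "'d::metric_space \<times> 'a::metric_space \<Rightarrow> 'm::real_normed_vector"
    and \<phi>2 :: "'d \<times> 'b::metric_space \<Rightarrow> 'm"
  assumes "C0 \<ge> 0" "\<alpha> \<ge> 0" "M0 > 0" "\<beta> > 0"
    and H1: "\<forall>\<xi>\<in>D. \<forall>x\<in>L1. \<forall>y\<in>L1. norm (\<phi>1 (\<xi>, x) - \<phi>1 (\<xi>, y)) \<le> C0 * dist x y powr \<alpha>"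
    and H2: "\<forall>\<xi>\<in>D. \<forall>x\<in>L2. \<forall>y\<in>L2. norm (\<phi>2 (\<xi>, x) - \<phi>2 (\<xi>, y)) \<le> C0 * dist x y powr \<alpha>"
    and B: "\<forall>\<xi>\<in>D. \<forall>\<xi>'\<in>D. \<forall>x1\<in>L1. \<forall>x2\<in>L2.
              norm ((\<phi>1 (\<xi>', x1) - \<phi>2 (\<xi>', x2)) - (\<phi>1 (\<xi>, x1) - \<phi>2 (\<xi>, x2)))
                \<ge> M0 * dist \<xi>' \<xi> powr \<beta>"
    and mem: "\<xi> \<in> D" "\<xi>' \<in> D" "x1 \<in> L1" "y1 \<in> L1" "x2 \<in> L2" "y2 \<in> L2"
    and coincide: "\<phi>1 (\<xi>, x1) = \<phi>2 (\<xi>, x2)" "\<phi>1 (\<xi>', y1) = \<phi>2 (\<xi>', y2)"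
  shows "dist \<xi> \<xi>' \<le> (2 * C0 / M0) powr (1 / \<beta>) * dist (x1, x2) (y1, y2) powr (\<alpha> / \<beta>)"
proof -
  define d where "d = dist (x1, x2) (y1, y2)"
  have "dist x1 y1 powr \<alpha> \<le> d powr \<alpha>" "dist x2 y2 powr \<alpha> \<le> d powr \<alpha>"
    using \<open>\<alpha> \<ge> 0\<close> dist_fst_le[of "(x1, x2)" "(y1, y2)"] dist_snd_le[of "(x1, x2)" "(y1, y2)"]
    by (auto simp: d_def intro: powr_mono2)
  have "M0 * dist \<xi>' \<xi> powr \<beta> \<le> norm (\<phi>1 (\<xi>', x1) - \<phi>2 (\<xi>', x2))"
    using B mem coincide(1) by force
  also have "\<phi>1 (\<xi>', x1) - \<phi>2 (\<xi>', x2) = (\<phi>1 (\<xi>', x1) - \<phi>1 (\<xi>', y1)) - (\<phi>2 (\<xi>', x2) - \<phi>2 (\<xi>', y2))"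
    using coincide(2) by (simp add: algebra_simps)
  also have "norm \<dots> \<le> norm (\<phi>1 (\<xi>', x1) - \<phi>1 (\<xi>', y1)) + norm (\<phi>2 (\<xi>', x2) - \<phi>2 (\<xi>', y2))"
    by (rule norm_triangle_ineq4)
  also have "\<dots> \<le> C0 * dist x1 y1 powr \<alpha> + C0 * dist x2 y2 powr \<alpha>"
    using H1 H2 mem by (intro add_mono) auto
  also have "\<dots> \<le> C0 * d powr \<alpha> + C0 * d powr \<alpha>"
    using \<open>C0 \<ge> 0\<close> \<open>dist x1 y1 powr \<alpha> \<le> d powr \<alpha>\<close> \<open>dist x2 y2 powr \<alpha> \<le> d powr \<alpha>\<close>
    by (intro add_mono mult_left_mono)
  finally have "dist \<xi> \<xi>' powr \<beta> \<le> (2 * C0 / M0) * d powr \<alpha>"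
    using \<open>M0 > 0\<close> by (simp add: field_simps dist_commute)
  have "dist \<xi> \<xi>' = (dist \<xi> \<xi>' powr \<beta>) powr (1 / \<beta>)"
    using \<open>\<beta> > 0\<close> by (simp add: powr_powr)
  also have "\<dots> \<le> ((2 * C0 / M0) * d powr \<alpha>) powr (1 / \<beta>)"
    using \<open>\<beta> > 0\<close> \<open>dist \<xi> \<xi>' powr \<beta> \<le> (2 * C0 / M0) * d powr \<alpha>\<close> by (intro powr_mono2) auto
  also have "\<dots> = (2 * C0 / M0) powr (1 / \<beta>) * d powr (\<alpha> / \<beta>)"
    using \<open>C0 \<ge> 0\<close> \<open>M0 > 0\<close> by (subst powr_mult) (auto simp: powr_powr d_def)
  finally show ?thesis unfolding d_def .
qed

theorem theorem1:
  fixes D :: "'d::metric_space set"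
    and L1 :: "'a::metric_space set"
    and L2 :: "'b::metric_space set"
    and \<phi>1 :: "'d \<times> 'a \<Rightarrow> 'm::real_normed_vector"
    and \<phi>2 :: "'d \<times> 'b \<Rightarrow> 'm"
    and C0 \<alpha> M0 \<beta> :: real
  assumes "C0 > 0" and "\<alpha> > 0"
    and "\<forall>\<xi>\<in>D. \<forall>x\<in>L1. \<forall>y\<in>L1. norm (\<phi>1 (\<xi>, x) - \<phi>1 (\<xi>, y)) \<le> C0 * dist x y powr \<alpha>"
    and "\<forall>\<xi>\<in>D. \<forall>x\<in>L2. \<forall>y\<in>L2. norm (\<phi>2 (\<xi>, x) - \<phi>2 (\<xi>, y)) \<le> C0 * dist x y powr \<alpha>"
    and "M0 > 0" and "\<beta> > 0"
    and "\<forall>\<xi>\<in>D. \<forall>\<xi>'\<in>D. \<forall>x1\<in>L1. \<forall>x2\<in>L2.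
           norm ((\<phi>1 (\<xi>', x1) - \<phi>2 (\<xi>', x2)) - (\<phi>1 (\<xi>, x1) - \<phi>2 (\<xi>, x2)))
             \<ge> M0 * dist \<xi>' \<xi> powr \<beta>"
  shows "hausdorff_dim {\<xi> \<in> D. (\<lambda>x. \<phi>1 (\<xi>, x)) ` L1 \<inter> (\<lambda>x. \<phi>2 (\<xi>, x)) ` L2 \<noteq> {}}
           \<le> min (ereal (\<beta> / \<alpha>) * hausdorff_dim (L1 \<times> L2)) (hausdorff_dim D)
       \<and> (continuous_on (D \<times> L1) \<phi>1 \<and> continuous_on (D \<times> L2) \<phi>2 \<and> compact L1 \<and> compact L2
          \<longrightarrow> closedin (top_of_set D)
                {\<xi> \<in> D. (\<lambda>x. \<phi>1 (\<xi>, x)) ` L1 \<inter> (\<lambda>x. \<phi>2 (\<xi>, x)) ` L2 \<noteq> {}})"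
proof -
  define S where "S = {\<xi> \<in> D. (\<lambda>x. \<phi>1 (\<xi>, x)) ` L1 \<inter> (\<lambda>x. \<phi>2 (\<xi>, x)) ` L2 \<noteq> {}}"
  have "\<forall>\<xi>\<in>S. \<exists>p\<in>L1 \<times> L2. \<phi>1 (\<xi>, fst p) = \<phi>2 (\<xi>, snd p)"
    by (force simp: S_def)
  then obtain g where g: "\<And>\<xi>. \<xi> \<in> S \<Longrightarrow> g \<xi> \<in> L1 \<times> L2 \<and> \<phi>1 (\<xi>, fst (g \<xi>)) = \<phi>2 (\<xi>, snd (g \<xi>))"
    by metis
  have "\<forall>\<xi>\<in>S. \<forall>\<xi>'\<in>S. dist \<xi> \<xi>' \<le> (2 * C0 / M0) powr (1 / \<beta>) * dist (g \<xi>) (g \<xi>') powr (\<alpha> / \<beta>)"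
  proof (intro ballI)
    fix \<xi> \<xi>' assume "\<xi> \<in> S" "\<xi>' \<in> S"
    then show "dist \<xi> \<xi>' \<le> (2 * C0 / M0) powr (1 / \<beta>) * dist (g \<xi>) (g \<xi>') powr (\<alpha> / \<beta>)"
      using coincidence_parameters_dist_le[of C0 \<alpha> M0 \<beta> D L1 \<phi>1 L2 \<phi>2 \<xi> \<xi>'
          "fst (g \<xi>)" "fst (g \<xi>')" "snd (g \<xi>)" "snd (g \<xi>')"] assms g[of \<xi>] g[of \<xi>']
      by (simp add: S_def mem_Times_iff)
  qed
  then have "hausdorff_dim S \<le> ereal (\<beta> / \<alpha>) * hausdorff_dim (g ` S)"
    using hausdorff_dim_le_if_inverse_Holder[of "(2 * C0 / M0) powr (1 / \<beta>)" "\<alpha> / \<beta>" S g] assms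
    by simp
  also have "\<dots> \<le> ereal (\<beta> / \<alpha>) * hausdorff_dim (L1 \<times> L2)"
  proof (rule ereal_mult_left_mono)
    show "hausdorff_dim (g ` S) \<le> hausdorff_dim (L1 \<times> L2)"
      using g by (intro hausdorff_dim_mono) blast
  qed (use \<open>\<alpha> > 0\<close> \<open>\<beta> > 0\<close> in simp)
  finally show ?thesis
    using hausdorff_dim_mono[of S D] closedin_coincidence_parameters[of D L1 \<phi>1 L2 \<phi>2]
    by (auto simp: S_def)
qed

end
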